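(* For every cwf $\mathcal C$, the assignment $\Gamma\mapsto\mathrm{Pr}^\wedge_{\mathcal C}(\Gamma)$ described below is a functor from $\mathcal C^{\mathrm{op}}$ to the category of lower semilattices (preorders with a top element and binary meets, with maps preserving order, top and meets); that is, $(\mathcal C,\mathrm{Pr}^\wedge_{\mathcal C})$ is a cwf with Horn doctrine. In particular, $\le_\Gamma$ is a preorder on $\mathrm{F}(\Gamma)$, $\langle\rangle$ is a top element, concatenation is a binary meet, and each $f:\Delta\to\Gamma$ induces a map preserving $\le$, $\top$ and $\wedge$.
   Context: A category with families (cwf) consists of: a category $\mathcal C$ with a terminal object $\top$; for each object $\Gamma$ a class $\mathrm{Ty}(\Gamma)$, and for $f:\Delta\to\Gamma$ a function $A\mapsto A\{f\}:\mathrm{Ty}(\Gamma)\to\mathrm{Ty}(\Delta)$ with $A\{1\}=A$, $A\{f\circ g\}=A\{f\}\{g\}$; for $A\in\mathrm{Ty}(\Gamma)$ an object $\Gamma.A$ and a morphism $\mathrm{p}(A)=\mathrm{p}_\Gamma(A):\Gamma.A\to\Gamma$; for $A\in\mathrm{Ty}(\Gamma)$ a class $\mathrm{Tm}(\Gamma,A)$ and for $f:\Delta\to\Gamma$ a function $a\mapsto a\{f\}:\mathrm{Tm}(\Gamma,A)\to\mathrm{Tm}(\Delta,A\{f\})$ with $a\{1\}=a$, $a\{f\circ g\}=a\{f\}\{g\}$; for each $A\in\mathrm{Ty}(\Gamma)$ an element $\mathrm{v}_A\in\mathrm{Tm}(\Gamma.A,A\{\mathrm{p}(A)\})$; for $f:\Delta\to\Gamma$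 and $a\in\mathrm{Tm}(\Delta,A\{f\})$ a morphism $\langle f,a\rangle_A:\Delta\to\Gamma.A$ such that $\mathrm{p}(A)\circ\langle f,a\rangle_A=f$, $\mathrm{v}_A\{\langle f,a\rangle_A\}=a$, $\langle\mathrm{p}(A)\circ h,\mathrm{v}_A\{h\}\rangle_A=h$ for every $h:\Delta\to\Gamma.A$, and $\langle f,a\rangle_A\circ g=\langle f\circ g,a\{g\}\rangle_A$. Notation: $\mathrm{p}^{(0)}=\mathrm{id}$ and $\mathrm{p}^{(k)}$ is the composite of the $k$ last canonical projections, so that for $A_1,\ldots,A_n\in\mathrm{Ty}(\Gamma)$ the object $\Gamma.A_1.A_2\{\mathrm p\}.\cdots.A_n\{\mathrm p^{(n-1)}\}$ is formed by successively extending $\Gamma$ by each $A_k$ pulled back along the composite $\mathrm{p}^{(k-1)}$ of the projections down to $\Gamma$, and $\mathrm{p}^{(n)}$ is its projection to $\Gamma$. $\mathrm{F}(\Gamma)$ is the set of finite sequences $\langle A_1,\ldots,A_n\rangle$ of elements of $\mathrm{Ty}(\Gamma)$, with $\langle A_1,\ldots,A_n\rangle\le_\Gamma\langle B_1,\ldots,B_m\rangle$ iff for every $k=1,\ldots,m$ the class $\mathrm{Tm}(\Gamma.A_1.A_2\{\mathrm p\}.\cdots.A_n\{\mathrm p^{(n-1)}\},B_k\{\mathrm p^{(n)}\})$ is inhabited. $\mathrm{Pr}^\wedge_{\mathcal C}(\Gamma)=(\mathrm F(\Gamma),\le_\Gamma)$ with $\top_\Gamma=\langle\rangle$ and $\langle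 A_1,\ldots,A_n\rangle\wedge_\Gamma\langle B_1,\ldots,B_m\rangle=\langle A_1,\ldots,A_n,B_1,\ldots,B_m\rangle$, and for $f:\Delta\to\Gamma$, $\langle A_1,\ldots,A_n\rangle\{f\}=\langle A_1\{f\},\ldots,A_n\{f\}\rangle$. *)

theory Defs
  imports Main
begin

text \<open>Objects of type 'o,
  morphisms 'm, types 'ty, terms 'tm. cHom C D G is the hom-set from D to G;
  ccomp C g f is g composed with f (first f, then g).
  cpair C G A f a is the morphism written <f,a>_A with A in Ty(G).\<close>

record ('o, 'm, 'ty, 'tm) cwf_data =
  cOb    :: "'o set"
  cHom   :: "'o \<Rightarrow> 'o \<Rightarrow> 'm set"
  ccomp  :: "'m \<Rightarrow> 'm \<Rightarrow> 'm"
  cid    :: "'o \<Rightarrow> 'm"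
  cterm  :: "'o"
  cTy    :: "'o \<Rightarrow> 'ty set"
  ctysub :: "'ty \<Rightarrow> 'm \<Rightarrow> 'ty"
  cext   :: "'o \<Rightarrow> 'ty \<Rightarrow> 'o"
  cp     :: "'o \<Rightarrow> 'ty \<Rightarrow> 'm"
  cTm    :: "'o \<Rightarrow> 'ty \<Rightarrow> 'tm set"
  ctmsub :: "'tm \<Rightarrow> 'm \<Rightarrow> 'tm"
  cv     :: "'o \<Rightarrow> 'ty \<Rightarrow> 'tm"
  cpair  :: "'o \<Rightarrow> 'ty \<Rightarrow> 'm \<Rightarrow> 'tm \<Rightarrow> 'm"

definition is_category :: "('o, 'm, 'ty, 'tm, 'z) cwf_data_scheme \<Rightarrow> bool" where
  "is_category C \<longleftrightarrow>
     (\<forall>X Y f. f \<in> cHom C X Y \<longrightarrow> X \<in> cOb C \<and> Y \<in> cOb C)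
   \<and> (\<forall>X Y X' Y' f. f \<in> cHom C X Y \<longrightarrow> f \<in> cHom C X' Y' \<longrightarrow> X = X' \<and> Y = Y')
   \<and> (\<forall>X \<in> cOb C. cid C X \<in> cHom C X X)
   \<and> (\<forall>X Y Z f g. f \<in> cHom C X Y \<longrightarrow> g \<in> cHom C Y Z \<longrightarrow> ccomp C g f \<in> cHom C X Z)
   \<and> (\<forall>X Y f. f \<in> cHom C X Y \<longrightarrow> ccomp C (cid C Y) f = f \<and> ccomp C f (cid C X) = f)
   \<and> (\<forall>W X Y Z f g h. f \<in> cHom C W X \<longrightarrow> g \<in> cHom C X Y \<longrightarrow> h \<in> cHom C Y Z \<longrightarrow>
        ccomp C h (ccomp C g f) = ccomp C (ccomp C h g) f)"

definition is_cwf :: "('o, 'm, 'ty, 'tm, 'z) cwf_data_scheme \<Rightarrow> bool" where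
  "is_cwf C \<longleftrightarrow> is_category C
   \<comment> \<open>terminal object\<close>
   \<and> cterm C \<in> cOb C
   \<and> (\<forall>X \<in> cOb C. \<exists>!t. t \<in> cHom C X (cterm C))
   \<comment> \<open>types and their substitution\<close>
   \<and> (\<forall>G D f A. f \<in> cHom C D G \<longrightarrow> A \<in> cTy C G \<longrightarrow> ctysub C A f \<in> cTy C D)
   \<and> (\<forall>G \<in> cOb C. \<forall>A \<in> cTy C G. ctysub C A (cid C G) = A)
   \<and> (\<forall>G D E f g A. f \<in> cHom C D G \<longrightarrow> g \<in> cHom C E D \<longrightarrow> A \<in> cTy C G \<longrightarrow>
        ctysub C A (ccomp C f g) = ctysub C (ctysub C A f) g)
   \<comment> \<open>context comprehension\<close>
   \<and> (\<forall>G \<in> cOb C. \<forall>A \<in> cTy C G. cext C G A \<in> cOb C \<and> cp C G A \<in> cHom C (cext C G A) G)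
   \<comment> \<open>terms and their substitution\<close>
   \<and> (\<forall>G D f A a. f \<in> cHom C D G \<longrightarrow> A \<in> cTy C G \<longrightarrow> a \<in> cTm C G A \<longrightarrow>
        ctmsub C a f \<in> cTm C D (ctysub C A f))
   \<and> (\<forall>G \<in> cOb C. \<forall>A \<in> cTy C G. \<forall>a \<in> cTm C G A. ctmsub C a (cid C G) = a)
   \<and> (\<forall>G D E f g A a. f \<in> cHom C D G \<longrightarrow> g \<in> cHom C E D \<longrightarrow> A \<in> cTy C G \<longrightarrow>
        a \<in> cTm C G A \<longrightarrow> ctmsub C a (ccomp C f g) = ctmsub C (ctmsub C a f) g)
   \<comment> \<open>variable\<close>
   \<and> (\<forall>G \<in> cOb C. \<forall>A \<in> cTy C G. cv C G A \<in> cTm C (cext C G A) (ctysub C A (cp C G A)))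
   \<comment> \<open>pairing\<close>
   \<and> (\<forall>G D f A a. f \<in> cHom C D G \<longrightarrow> A \<in> cTy C G \<longrightarrow> a \<in> cTm C D (ctysub C A f) \<longrightarrow>
        cpair C G A f a \<in> cHom C D (cext C G A)
      \<and> ccomp C (cp C G A) (cpair C G A f a) = f
      \<and> ctmsub C (cv C G A) (cpair C G A f a) = a)
   \<and> (\<forall>G D A h. A \<in> cTy C G \<longrightarrow> h \<in> cHom C D (cext C G A) \<longrightarrow>
        cpair C G A (ccomp C (cp C G A) h) (ctmsub C (cv C G A) h) = h)
   \<and> (\<forall>G D E f g A a. f \<in> cHom C D G \<longrightarrow> g \<in> cHom C E D \<longrightarrow> A \<in> cTy C G \<longrightarrow>
        a \<in> cTm C D (ctysub C A f) \<longrightarrow>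
        ccomp C (cpair C G A f a) g = cpair C G A (ccomp C f g) (ctmsub C a g))"

text \<open>Iterated extension: for [A1,...,An] returns the object
  G.A1.A2{p}...An{p^(n-1)} together with its projection p^(n) to G.\<close>

definition tele :: "('o, 'm, 'ty, 'tm, 'z) cwf_data_scheme \<Rightarrow> 'o \<Rightarrow> 'ty list \<Rightarrow> 'o \<times> 'm" where
  "tele C G As = foldl (\<lambda>(D, q) A. (cext C D (ctysub C A q), ccomp C q (cp C D (ctysub C A q))))
                       (G, cid C G) As"

definition FF :: "('o, 'm, 'ty, 'tm, 'z) cwf_data_scheme \<Rightarrow> 'o \<Rightarrow> 'ty list set" where
  "FF C G = {As. set As \<subseteq> cTy C G}"

definition Fle :: "('o, 'm, 'ty, 'tm, 'z) cwf_data_scheme \<Rightarrow> 'o \<Rightarrow> 'ty list \<Rightarrow> 'ty list \<Rightarrow> bool" where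
  "Fle C G As Bs \<longleftrightarrow>
     (\<forall>k < length Bs. cTm C (fst (tele C G As)) (ctysub C (Bs ! k) (snd (tele C G As))) \<noteq> {})"

definition Fsub :: "('o, 'm, 'ty, 'tm, 'z) cwf_data_scheme \<Rightarrow> 'm \<Rightarrow> 'ty list \<Rightarrow> 'ty list" where
  "Fsub C f As = map (\<lambda>A. ctysub C A f) As"

definition lower_semilattice ::
  "'a set \<Rightarrow> ('a \<Rightarrow> 'a \<Rightarrow> bool) \<Rightarrow> 'a \<Rightarrow> ('a \<Rightarrow> 'a \<Rightarrow> 'a) \<Rightarrow> bool" where
  "lower_semilattice S le tp mt \<longleftrightarrow>
     (\<forall>x \<in> S. le x x)
   \<and> (\<forall>x \<in> S. \<forall>y \<in> S. \<forall>z \<in> S. le x y \<longrightarrow> le y z \<longrightarrow> le x z)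
   \<and> tp \<in> S \<and> (\<forall>x \<in> S. le x tp)
   \<and> (\<forall>x \<in> S. \<forall>y \<in> S. mt x y \<in> S \<and> le (mt x y) x \<and> le (mt x y) y
        \<and> (\<forall>z \<in> S. le z x \<longrightarrow> le z y \<longrightarrow> le z (mt x y)))"

definition lsl_hom ::
  "'a set \<Rightarrow> ('a \<Rightarrow> 'a \<Rightarrow> bool) \<Rightarrow> 'a \<Rightarrow> ('a \<Rightarrow> 'a \<Rightarrow> 'a) \<Rightarrow>
   'b set \<Rightarrow> ('b \<Rightarrow> 'b \<Rightarrow> bool) \<Rightarrow> 'b \<Rightarrow> ('b \<Rightarrow> 'b \<Rightarrow> 'b) \<Rightarrow> ('a \<Rightarrow> 'b) \<Rightarrow> bool" where
  "lsl_hom S le tp mt S' le' tp' mt' h \<longleftrightarrow>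
     (\<forall>x \<in> S. h x \<in> S')
   \<and> (\<forall>x \<in> S. \<forall>y \<in> S. le x y \<longrightarrow> le' (h x) (h y))
   \<and> h tp = tp'
   \<and> (\<forall>x \<in> S. \<forall>y \<in> S. h (mt x y) = mt' (h x) (h y))"

end

theory Submission
  imports Defs
begin

text \<open>Write \<open>\<Gamma>.As\<close> for the iterated extension of \<open>\<Gamma>\<close> by \<open>As\<close> and \<open>p\<^sub>A\<^sub>s\<close> for
  its projection to \<open>\<Gamma>\<close>. This projection has a universal property: \<open>h : \<Delta> \<rightarrow> \<Gamma>\<close> factors
  through \<open>p\<^sub>A\<^sub>s\<close> exactly when \<open>A{h}\<close> is inhabited over \<open>\<Delta>\<close> for every \<open>A\<close> in \<open>As\<close>.
  Hence \<open>As \<le> Bs\<close> means that \<open>p\<^sub>A\<^sub>s\<close> factors through \<open>p\<^sub>B\<^sub>s\<close>, so reflexivity and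
  transitivity come from identities and composition; concatenation is a meet because
  inhabitation is checked componentwise; and substitution along \<open>f\<close> is monotone because
  \<open>f \<circ> p'\<close>, with \<open>p'\<close> the projection for \<open>As{f}\<close>, factors through \<open>p\<^sub>A\<^sub>s\<close>, and the
  witnesses of \<open>As \<le> Bs\<close> can be substituted along the factorisation.\<close>

abbreviation tele_ctx :: "('o, 'm, 'ty, 'tm, 'z) cwf_data_scheme \<Rightarrow> 'o \<Rightarrow> 'ty list \<Rightarrow> 'o" where
  "tele_ctx C G As \<equiv> fst (tele C G As)"

abbreviation tele_proj :: "('o, 'm, 'ty, 'tm, 'z) cwf_data_scheme \<Rightarrow> 'o \<Rightarrow> 'ty list \<Rightarrow> 'm" where
  "tele_proj C G As \<equiv> snd (tele C G As)"

definition inhabited_under ::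
  "('o, 'm, 'ty, 'tm, 'z) cwf_data_scheme \<Rightarrow> 'o \<Rightarrow> 'm \<Rightarrow> 'ty list \<Rightarrow> bool" where
  "inhabited_under C D h Bs \<longleftrightarrow> (\<forall>B \<in> set Bs. cTm C D (ctysub C B h) \<noteq> {})"

lemma inhabited_under_append [simp]:
  "inhabited_under C D h (As @ Bs) \<longleftrightarrow> inhabited_under C D h As \<and> inhabited_under C D h Bs"
  by (auto simp: inhabited_under_def)

lemma Fle_iff_inhabited_under:
  "Fle C G As Bs \<longleftrightarrow> inhabited_under C (tele_ctx C G As) (tele_proj C G As) Bs"
  by (simp add: Fle_def inhabited_under_def all_set_conv_all_nth)

lemma tele_Nil [simp]: "tele C G [] = (G, cid C G)"
  by (simp add: tele_def)

lemma tele_snoc: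
  "tele C G (Bs @ [B]) =
     (let D = tele_ctx C G Bs; q = tele_proj C G Bs; B' = ctysub C B q
      in (cext C D B', ccomp C q (cp C D B')))"
  by (simp add: tele_def split_beta Let_def)

locale cwf =
  fixes C :: "('o, 'm, 'ty, 'tm, 'z) cwf_data_scheme"
  assumes is_cwf: "is_cwf C"
begin

lemma is_category: "is_category C"
  using is_cwf by (simp add: is_cwf_def)

lemma hom_Ob: "f \<in> cHom C X Y \<Longrightarrow> X \<in> cOb C \<and> Y \<in> cOb C"
  using is_category unfolding is_category_def by (elim conjE) blast

lemma id_hom: "X \<in> cOb C \<Longrightarrow> cid C X \<in> cHom C X X"
  using is_category unfolding is_category_def by blast

lemma comp_hom: "f \<in> cHom C X Y \<Longrightarrow> g \<in> cHom C Y Z \<Longrightarrow> ccomp C g f \<in> cHom C X Z"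
  using is_category unfolding is_category_def by blast

lemma comp_id_left: "f \<in> cHom C X Y \<Longrightarrow> ccomp C (cid C Y) f = f"
  using is_category unfolding is_category_def by blast

lemma comp_assoc:
  "f \<in> cHom C W X \<Longrightarrow> g \<in> cHom C X Y \<Longrightarrow> h \<in> cHom C Y Z \<Longrightarrow>
   ccomp C (ccomp C h g) f = ccomp C h (ccomp C g f)"
  using is_category unfolding is_category_def by (elim conjE) metis

lemma tysub_Ty: "f \<in> cHom C D G \<Longrightarrow> A \<in> cTy C G \<Longrightarrow> ctysub C A f \<in> cTy C D"
  using is_cwf unfolding is_cwf_def by simp

lemma tysub_id: "G \<in> cOb C \<Longrightarrow> A \<in> cTy C G \<Longrightarrow> ctysub C A (cid C G) = A"
  using is_cwf unfolding is_cwf_def by simp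

lemma tysub_comp:
  "f \<in> cHom C D G \<Longrightarrow> g \<in> cHom C E D \<Longrightarrow> A \<in> cTy C G \<Longrightarrow>
   ctysub C A (ccomp C f g) = ctysub C (ctysub C A f) g"
  using is_cwf unfolding is_cwf_def by simp

lemma ext_Ob: "G \<in> cOb C \<Longrightarrow> A \<in> cTy C G \<Longrightarrow> cext C G A \<in> cOb C"
  using is_cwf unfolding is_cwf_def by simp

lemma p_hom: "G \<in> cOb C \<Longrightarrow> A \<in> cTy C G \<Longrightarrow> cp C G A \<in> cHom C (cext C G A) G"
  using is_cwf unfolding is_cwf_def by simp

lemma tmsub_Tm:
  "f \<in> cHom C D G \<Longrightarrow> A \<in> cTy C G \<Longrightarrow> a \<in> cTm C G A \<Longrightarrow> ctmsub C a f \<in> cTm C D (ctysub C A f)"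
  using is_cwf unfolding is_cwf_def by simp

lemma v_Tm: "G \<in> cOb C \<Longrightarrow> A \<in> cTy C G \<Longrightarrow> cv C G A \<in> cTm C (cext C G A) (ctysub C A (cp C G A))"
  using is_cwf unfolding is_cwf_def by simp

lemma pair_hom:
  "f \<in> cHom C D G \<Longrightarrow> A \<in> cTy C G \<Longrightarrow> a \<in> cTm C D (ctysub C A f) \<Longrightarrow>
   cpair C G A f a \<in> cHom C D (cext C G A)"
  using is_cwf unfolding is_cwf_def by simp

lemma p_pair:
  "f \<in> cHom C D G \<Longrightarrow> A \<in> cTy C G \<Longrightarrow> a \<in> cTm C D (ctysub C A f) \<Longrightarrow>
   ccomp C (cp C G A) (cpair C G A f a) = f"
  using is_cwf unfolding is_cwf_def by simp

lemma Fsub_FF: "f \<in> cHom C D G \<Longrightarrow> As \<in> FF C G \<Longrightarrow> Fsub C f As \<in> FF C D"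
  by (auto simp: FF_def Fsub_def tysub_Ty)

lemma Fsub_id: "G \<in> cOb C \<Longrightarrow> As \<in> FF C G \<Longrightarrow> Fsub C (cid C G) As = As"
  unfolding FF_def Fsub_def by (intro map_idI) (auto simp: tysub_id)

lemma Fsub_comp:
  "f \<in> cHom C D G \<Longrightarrow> g \<in> cHom C E D \<Longrightarrow> As \<in> FF C G \<Longrightarrow>
   Fsub C (ccomp C f g) As = Fsub C g (Fsub C f As)"
  by (auto simp: FF_def Fsub_def tysub_comp)

lemma inhabited_under_comp:
  assumes "h \<in> cHom C D G" "u \<in> cHom C E D" "Bs \<in> FF C G" "inhabited_under C D h Bs"
  shows "inhabited_under C E (ccomp C h u) Bs"
  using assms tmsub_Tm[OF assms(2) tysub_Ty[OF assms(1)]]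
  by (fastforce simp: inhabited_under_def FF_def tysub_comp)

lemma inhabited_under_Fsub:
  assumes "f \<in> cHom C D G" "h \<in> cHom C E D" "As \<in> FF C G"
  shows "inhabited_under C E h (Fsub C f As) \<longleftrightarrow> inhabited_under C E (ccomp C f h) As"
  using assms by (auto simp: inhabited_under_def FF_def Fsub_def subset_iff tysub_comp)

lemma tele_hom:
  assumes "G \<in> cOb C" "Bs \<in> FF C G"
  shows "tele_ctx C G Bs \<in> cOb C \<and> tele_proj C G Bs \<in> cHom C (tele_ctx C G Bs) G"
  using assms(2)
proof (induction Bs rule: rev_induct)
  case Nil
  then show ?case using assms(1) id_hom by simp
next
  case (snoc B Bs)
  then have "tele_ctx C G Bs \<in> cOb C" "tele_proj C G Bs \<in> cHom C (tele_ctx C G Bs) G"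
    and "ctysub C B (tele_proj C G Bs) \<in> cTy C (tele_ctx C G Bs)"
    by (auto simp: FF_def intro: tysub_Ty)
  then show ?case by (auto simp: tele_snoc Let_def intro: ext_Ob comp_hom[OF p_hom])
qed

lemma inhabited_under_tele_proj:
  assumes G: "G \<in> cOb C"
  shows "Bs \<in> FF C G \<Longrightarrow> inhabited_under C (tele_ctx C G Bs) (tele_proj C G Bs) Bs"
proof (induction Bs rule: rev_induct)
  case Nil
  then show ?case by (simp add: inhabited_under_def)
next
  case (snoc B Bs)
  let ?D = "tele_ctx C G Bs" and ?q = "tele_proj C G Bs"
  let ?B' = "ctysub C B ?q"
  let ?p = "cp C ?D ?B'"
  have Bs: "Bs \<in> FF C G" and B: "B \<in> cTy C G" using snoc.prems by (auto simp: FF_def)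
  have D: "?D \<in> cOb C" and q: "?q \<in> cHom C ?D G" using tele_hom[OF G Bs] by auto
  have B': "?B' \<in> cTy C ?D" using tysub_Ty[OF q B] .
  have p: "?p \<in> cHom C (cext C ?D ?B') ?D" using p_hom[OF D B'] .
  have "inhabited_under C (cext C ?D ?B') (ccomp C ?q ?p) Bs"
    using inhabited_under_comp[OF q p Bs snoc.IH[OF Bs]] .
  moreover have "cv C ?D ?B' \<in> cTm C (cext C ?D ?B') (ctysub C B (ccomp C ?q ?p))"
    using v_Tm[OF D B'] tysub_comp[OF q p B] by simp
  ultimately show ?case by (auto simp: tele_snoc Let_def inhabited_under_def)
qed

lemma factor_through_tele_proj:
  assumes G: "G \<in> cOb C"
  shows "Bs \<in> FF C G \<Longrightarrow> h \<in> cHom C E G \<Longrightarrow> inhabited_under C E h Bs \<Longrightarrow>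
    \<exists>u \<in> cHom C E (tele_ctx C G Bs). ccomp C (tele_proj C G Bs) u = h"
proof (induction Bs arbitrary: h rule: rev_induct)
  case Nil
  then show ?case using comp_id_left hom_Ob id_hom by fastforce
next
  case (snoc B Bs)
  let ?D = "tele_ctx C G Bs" and ?q = "tele_proj C G Bs"
  let ?B' = "ctysub C B ?q"
  let ?p = "cp C ?D ?B'"
  have Bs: "Bs \<in> FF C G" and B: "B \<in> cTy C G" using snoc.prems by (auto simp: FF_def)
  have D: "?D \<in> cOb C" and q: "?q \<in> cHom C ?D G" using tele_hom[OF G Bs] by auto
  have B': "?B' \<in> cTy C ?D" using tysub_Ty[OF q B] .
  obtain u where u: "u \<in> cHom C E ?D" "ccomp C ?q u = h"
    using snoc.IH[OF Bs snoc.prems(2)] snoc.prems(3) by auto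
  obtain b where "b \<in> cTm C E (ctysub C B h)"
    using snoc.prems(3) by (auto simp: inhabited_under_def)
  then have b: "b \<in> cTm C E (ctysub C ?B' u)" using tysub_comp[OF q u(1) B] u(2) by simp
  let ?w = "cpair C ?D ?B' u b"
  have w: "?w \<in> cHom C E (cext C ?D ?B')" using pair_hom[OF u(1) B' b] .
  have "ccomp C (ccomp C ?q ?p) ?w = h"
    using comp_assoc[OF w p_hom[OF D B'] q] p_pair[OF u(1) B' b] u(2) by simp
  with w show ?case by (auto simp: tele_snoc Let_def)
qed

lemma factor_through_tele_proj_iff:
  assumes "G \<in> cOb C" "Bs \<in> FF C G" "h \<in> cHom C E G"
  shows "(\<exists>u \<in> cHom C E (tele_ctx C G Bs). ccomp C (tele_proj C G Bs) u = h)
    \<longleftrightarrow> inhabited_under C E h Bs"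
  using factor_through_tele_proj[OF assms] tele_hom[OF assms(1,2)]
    inhabited_under_comp[OF _ _ assms(2) inhabited_under_tele_proj[OF assms(1,2)]]
  by blast

lemma Fle_iff_factor:
  assumes "G \<in> cOb C" "As \<in> FF C G" "Bs \<in> FF C G"
  shows "Fle C G As Bs \<longleftrightarrow>
    (\<exists>u \<in> cHom C (tele_ctx C G As) (tele_ctx C G Bs). ccomp C (tele_proj C G Bs) u = tele_proj C G As)"
  using factor_through_tele_proj_iff[OF assms(1,3)] tele_hom[OF assms(1,2)]
  by (simp add: Fle_iff_inhabited_under)

lemma Fle_refl: "G \<in> cOb C \<Longrightarrow> As \<in> FF C G \<Longrightarrow> Fle C G As As"
  using inhabited_under_tele_proj by (simp add: Fle_iff_inhabited_under)

lemma Fle_trans: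
  assumes G: "G \<in> cOb C" and "As \<in> FF C G" "Bs \<in> FF C G" "Cs \<in> FF C G"
    and "Fle C G As Bs" "Fle C G Bs Cs"
  shows "Fle C G As Cs"
proof -
  obtain u where u: "u \<in> cHom C (tele_ctx C G As) (tele_ctx C G Bs)"
      "ccomp C (tele_proj C G Bs) u = tele_proj C G As"
    using assms Fle_iff_factor by blast
  obtain v where v: "v \<in> cHom C (tele_ctx C G Bs) (tele_ctx C G Cs)"
      "ccomp C (tele_proj C G Cs) v = tele_proj C G Bs"
    using assms Fle_iff_factor by blast
  have r: "tele_proj C G Cs \<in> cHom C (tele_ctx C G Cs) G"
    using tele_hom[OF G \<open>Cs \<in> FF C G\<close>] by simp
  have "ccomp C (tele_proj C G Cs) (ccomp C v u) = tele_proj C G As"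
    using comp_assoc[OF u(1) v(1) r] u(2) v(2) by simp
  then show ?thesis
    using Fle_iff_factor[OF G \<open>As \<in> FF C G\<close> \<open>Cs \<in> FF C G\<close>] comp_hom[OF u(1) v(1)] by blast
qed

lemma Fle_Fsub:
  assumes f: "f \<in> cHom C D G" and As: "As \<in> FF C G" and Bs: "Bs \<in> FF C G"
    and le: "Fle C G As Bs"
  shows "Fle C D (Fsub C f As) (Fsub C f Bs)"
proof -
  let ?As' = "Fsub C f As"
  have G: "G \<in> cOb C" and D: "D \<in> cOb C" using hom_Ob[OF f] by auto
  have As': "?As' \<in> FF C D" using Fsub_FF[OF f As] .
  have q: "tele_proj C G As \<in> cHom C (tele_ctx C G As) G" using tele_hom[OF G As] by simp
  have q': "tele_proj C D ?As' \<in> cHom C (tele_ctx C D ?As') D" using tele_hom[OF D As'] by simp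
  have "inhabited_under C (tele_ctx C D ?As') (ccomp C f (tele_proj C D ?As')) As"
    using inhabited_under_tele_proj[OF D As'] inhabited_under_Fsub[OF f q' As] by simp
  then obtain w where w: "w \<in> cHom C (tele_ctx C D ?As') (tele_ctx C G As)"
      "ccomp C (tele_proj C G As) w = ccomp C f (tele_proj C D ?As')"
    using factor_through_tele_proj[OF G As comp_hom[OF q' f]] by blast
  have "inhabited_under C (tele_ctx C D ?As') (ccomp C f (tele_proj C D ?As')) Bs"
    using inhabited_under_comp[OF q w(1) Bs] le w(2) by (simp add: Fle_iff_inhabited_under)
  then show ?thesis
    using inhabited_under_Fsub[OF f q' Bs] by (simp add: Fle_iff_inhabited_under)
qed

lemma lower_semilattice_Pr:
  assumes G: "G \<in> cOb C"
  shows "lower_semilattice (FF C G) (Fle C G) [] (@)"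
proof -
  have FF_closed: "[] \<in> FF C G" "\<And>As Bs. As \<in> FF C G \<Longrightarrow> Bs \<in> FF C G \<Longrightarrow> As @ Bs \<in> FF C G"
    by (simp_all add: FF_def)
  have top: "Fle C G As []" for As
    by (simp add: Fle_def)
  have meet: "Fle C G Zs (Xs @ Ys) \<longleftrightarrow> Fle C G Zs Xs \<and> Fle C G Zs Ys" for Zs Xs Ys
    by (simp add: Fle_iff_inhabited_under)
  show ?thesis
    unfolding lower_semilattice_def
    using FF_closed top meet Fle_refl[OF G] Fle_trans[OF G] by meson
qed

lemma lsl_hom_Fsub:
  assumes "f \<in> cHom C D G"
  shows "lsl_hom (FF C G) (Fle C G) [] (@) (FF C D) (Fle C D) [] (@) (Fsub C f)"
  using Fsub_FF[OF assms] Fle_Fsub[OF assms] by (auto simp: lsl_hom_def Fsub_def)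

end

theorem mainTheorem16:
  fixes C :: "('o, 'm, 'ty, 'tm, 'z) cwf_data_scheme"
  assumes "is_cwf C"
  shows "(\<forall>G \<in> cOb C. lower_semilattice (FF C G) (Fle C G) [] (@))
       \<and> (\<forall>G D f. f \<in> cHom C D G \<longrightarrow>
            lsl_hom (FF C G) (Fle C G) [] (@) (FF C D) (Fle C D) [] (@) (Fsub C f))
       \<and> (\<forall>G \<in> cOb C. \<forall>As \<in> FF C G. Fsub C (cid C G) As = As)
       \<and> (\<forall>G D E f g. f \<in> cHom C D G \<longrightarrow> g \<in> cHom C E D \<longrightarrow>
            (\<forall>As \<in> FF C G. Fsub C (ccomp C f g) As = Fsub C g (Fsub C f As)))"
proof -
  interpret cwf C by (rule cwf.intro[OF assms])
  show ?thesis
    using lower_semilattice_Pr lsl_hom_Fsub Fsub_id Fsub_comp by blast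
qed

end
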